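(* Let $\mathbb{M}^3$ be either the Euclidean space $\mathbb{R}^3$ or the round unit sphere $\mathbb{S}^3$. Then every complete end of revolution in $\mathbb{M}^3$ is a parabolic end.
   Context: Let $\mathbb{M}^3(\kappa)$ denote the simply connected $3$-dimensional space form of constant sectional curvature $\kappa$. A complete end of revolution in $\mathbb{M}^3(\kappa)$ is defined as follows: take a geodesic $\sigma$ of $\mathbb{M}^3(\kappa)$, a totally geodesic surface $\mathbb{M}^2(\kappa)\subset\mathbb{M}^3(\kappa)$ containing $\sigma$, and a smooth regular curve $\beta:[0,\infty)\to\mathbb{M}^2(\kappa)$ of infinite length which does not intersect $\sigma$ (so $\beta$ lies in one open half of $\mathbb{M}^2(\kappa)\setminus\sigma$). The end is $E=\{R_\theta(\beta(t)) : t\ge 0,\ \theta\in[0,2\pi)\}$, where $\{R_\theta\}$ is the group (isomorphic to $SO(2)$) of orientation-preserving isometries of $\mathbb{M}^3(\kappa)$ fixing $\sigma$ pointwise; it is the image of the immersion $(t,\theta)\mapsto R_\theta(\beta(t))$ of $[0,\infty)\times\mathbb{S}^1$ and carries the induced Riemannian metric. An end $E$ (a surface with compact boundary) is parabolic if every bounded harmonic function on $E$ is determined by its boundary values. *)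

theory Defs
  imports "HOL-Analysis.Analysis"
begin

text \<open>Rotation by angle th in the 2-plane spanned by the orthonormal vectors f1, f2,
  around the centre p (fixing pointwise the affine subspace through p orthogonal to f1, f2).\<close>
definition rot :: "'a::real_inner \<Rightarrow> 'a \<Rightarrow> 'a \<Rightarrow> real \<Rightarrow> 'a \<Rightarrow> 'a" where
  "rot p f1 f2 th x =
     (let a = (x - p) \<bullet> f1; b = (x - p) \<bullet> f2
      in x + ((cos th - 1) * a - sin th * b) *\<^sub>R f1 + (sin th * a + (cos th - 1) * b) *\<^sub>R f2)"

text \<open>The immersion (t, th) maps to R_th (beta t) of [0,inf) x S^1 (th taken 2pi-periodically).\<close>
definition end_imm :: "'a::real_inner \<Rightarrow> 'a \<Rightarrow> 'a \<Rightarrow> (real \<Rightarrow> 'a) \<Rightarrow> real \<times> real \<Rightarrow> 'a" where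
  "end_imm p f1 f2 beta = (\<lambda>(t, th). rot p f1 f2 th (beta t))"

definition smooth_curve :: "(real \<Rightarrow> 'a::real_normed_vector) \<Rightarrow> bool" where
  "smooth_curve beta \<longleftrightarrow>
     (\<exists>D. D 0 = beta \<and> (\<forall>k. \<forall>t\<ge>0. (D k has_vector_derivative D (Suc k) t) (at t within {0..})))"

definition regular_curve :: "(real \<Rightarrow> 'a::real_normed_vector) \<Rightarrow> bool" where
  "regular_curve beta \<longleftrightarrow> (\<forall>t\<ge>0. vector_derivative beta (at t within {0..}) \<noteq> 0)"

definition infinite_length :: "(real \<Rightarrow> 'a::real_normed_vector) \<Rightarrow> bool" where
  "infinite_length beta \<longleftrightarrow>
     filterlim (\<lambda>T. integral {0..T} (\<lambda>t. norm (vector_derivative beta (at t within {0..}))))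
       at_top at_top"

definition Xt :: "(real \<times> real \<Rightarrow> 'a::real_normed_vector) \<Rightarrow> real \<times> real \<Rightarrow> 'a" where
  "Xt X q = vector_derivative (\<lambda>s. X (s, snd q)) (at (fst q))"

definition Xth :: "(real \<times> real \<Rightarrow> 'a::real_normed_vector) \<Rightarrow> real \<times> real \<Rightarrow> 'a" where
  "Xth X q = vector_derivative (\<lambda>s. X (fst q, s)) (at (snd q))"

definition g11 :: "(real \<times> real \<Rightarrow> 'a::real_inner) \<Rightarrow> real \<times> real \<Rightarrow> real" where
  "g11 X q = Xt X q \<bullet> Xt X q"
definition g12 :: "(real \<times> real \<Rightarrow> 'a::real_inner) \<Rightarrow> real \<times> real \<Rightarrow> real" where
  "g12 X q = Xt X q \<bullet> Xth X q"
definition g22 :: "(real \<times> real \<Rightarrow> 'a::real_inner) \<Rightarrow> real \<times> real \<Rightarrow> real" where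
  "g22 X q = Xth X q \<bullet> Xth X q"
definition gdet :: "(real \<times> real \<Rightarrow> 'a::real_inner) \<Rightarrow> real \<times> real \<Rightarrow> real" where
  "gdet X q = g11 X q * g22 X q - (g12 X q)\<^sup>2"

definition d1 :: "(real \<times> real \<Rightarrow> real) \<Rightarrow> real \<times> real \<Rightarrow> real" where
  "d1 u q = deriv (\<lambda>s. u (s, snd q)) (fst q)"
definition d2 :: "(real \<times> real \<Rightarrow> real) \<Rightarrow> real \<times> real \<Rightarrow> real" where
  "d2 u q = deriv (\<lambda>s. u (fst q, s)) (snd q)"

text \<open>Laplace-Beltrami operator of the induced metric, in divergence form:
  (1/sqrt G) * sum_i d_i (sqrt G * g^ij * d_j u).\<close>
definition flux1 :: "(real \<times> real \<Rightarrow> 'a::real_inner) \<Rightarrow> (real \<times> real \<Rightarrow> real) \<Rightarrow> real \<times> real \<Rightarrow> real" where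
  "flux1 X u q = (g22 X q * d1 u q - g12 X q * d2 u q) / sqrt (gdet X q)"
definition flux2 :: "(real \<times> real \<Rightarrow> 'a::real_inner) \<Rightarrow> (real \<times> real \<Rightarrow> real) \<Rightarrow> real \<times> real \<Rightarrow> real" where
  "flux2 X u q = (g11 X q * d2 u q - g12 X q * d1 u q) / sqrt (gdet X q)"
definition laplace_beltrami :: "(real \<times> real \<Rightarrow> 'a::real_inner) \<Rightarrow> (real \<times> real \<Rightarrow> real) \<Rightarrow> real \<times> real \<Rightarrow> real" where
  "laplace_beltrami X u q = (d1 (flux1 X u) q + d2 (flux2 X u) q) / sqrt (gdet X q)"

definition C2_on :: "(real \<times> real) set \<Rightarrow> (real \<times> real \<Rightarrow> real) \<Rightarrow> bool" where
  "C2_on S u \<longleftrightarrow> u differentiable_on S \<and> d1 u differentiable_on S \<and> d2 u differentiable_on S \<and>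
     continuous_on S (d1 (d1 u)) \<and> continuous_on S (d2 (d1 u)) \<and>
     continuous_on S (d1 (d2 u)) \<and> continuous_on S (d2 (d2 u))"

definition harmonic_end :: "(real \<times> real \<Rightarrow> 'a::real_inner) \<Rightarrow> (real \<times> real \<Rightarrow> real) \<Rightarrow> bool" where
  "harmonic_end X u \<longleftrightarrow> C2_on ({0<..} \<times> UNIV) u \<and>
     (\<forall>q \<in> {0<..} \<times> UNIV. laplace_beltrami X u q = 0)"

text \<open>Bounded harmonic function on the end E = [0,inf) x S^1 (functions on S^1 as
  2pi-periodic functions), continuous up to the boundary t = 0.\<close>
definition bounded_harmonic_on_end :: "(real \<times> real \<Rightarrow> 'a::real_inner) \<Rightarrow> (real \<times> real \<Rightarrow> real) \<Rightarrow> bool" where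
  "bounded_harmonic_on_end X u \<longleftrightarrow> harmonic_end X u \<and> continuous_on ({0..} \<times> UNIV) u \<and>
     bounded (u ` ({0..} \<times> UNIV)) \<and> (\<forall>t th. u (t, th + 2 * pi) = u (t, th))"

definition parabolic_end :: "(real \<times> real \<Rightarrow> 'a::real_inner) \<Rightarrow> bool" where
  "parabolic_end X \<longleftrightarrow>
     (\<forall>u v. bounded_harmonic_on_end X u \<and> bounded_harmonic_on_end X v \<and>
        (\<forall>th. u (0, th) = v (0, th)) \<longrightarrow> (\<forall>t\<ge>0. \<forall>th. u (t, th) = v (t, th)))"

end

theory Submission
  imports Defs "HOL-Library.Periodic_Fun"
begin

text \<open>In the coordinates \<open>(t, \<theta>)\<close> the induced metric is \<open>|\<beta>'|\<^sup>2 dt\<^sup>2 + r\<^sup>2 d\<theta>\<^sup>2\<close>, where \<open>r\<close> is the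
  distance of \<open>\<beta>(t)\<close> to the axis; in the conformal coordinate \<open>\<psi>(t) = \<integral>\<^sub>0\<^sup>t |\<beta>'| / r\<close> it becomes
  \<open>r\<^sup>2 (d\<psi>\<^sup>2 + d\<theta>\<^sup>2)\<close>, so \<open>\<psi>\<close> is harmonic. Since \<open>r\<close> grows at most like arclength,
  \<open>\<psi>(t) \<ge> log (1 + L(t) / r(0))\<close>, which tends to infinity along a curve of infinite length.
  If bounded harmonic \<open>u, v\<close> agree on the boundary but \<open>u > v\<close> somewhere, then
  \<open>u - v - \<epsilon> \<psi>\<close> is positive there, zero on the boundary and negative for large \<open>t\<close>, hence has
  an interior maximum; a small strictly subharmonic correction \<open>\<delta> \<psi>\<^sup>2\<close> turns this into a
  contradiction with the second-derivative test.\<close>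

lemma local_max_imp_flux_deriv_nonpos:
  fixes h h' k :: "real \<Rightarrow> real"
  assumes "0 < d"
    and max: "\<And>y. \<bar>x - y\<bar> < d \<Longrightarrow> h y \<le> h x"
    and h': "\<And>y. \<bar>x - y\<bar> < d \<Longrightarrow> (h has_real_derivative h' y) (at y)"
    and k_pos: "\<And>y. \<bar>x - y\<bar> < d \<Longrightarrow> k y > 0"
    and flux: "((\<lambda>s. k s * h' s) has_real_derivative D) (at x)"
  shows "D \<le> 0"
proof (rule ccontr)
  assume "\<not> D \<le> 0"
  then obtain e where e: "e > 0" "\<And>r. 0 < r \<Longrightarrow> r < e \<Longrightarrow> k x * h' x < k (x + r) * h' (x + r)"
    using DERIV_pos_inc_right[OF flux] by (meson not_le)
  have "h' x = 0" using DERIV_local_max[OF h'[of x] \<open>0 < d\<close>] max \<open>0 < d\<close> by auto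
  define r where "r = min e d / 2"
  have r: "0 < r" "r < e" "r < d" using e \<open>0 < d\<close> by (auto simp: r_def)
  have h'_pos: "h' y > 0" if "x < y" "y \<le> x + r" for y
  proof -
    have "0 < k y * h' y" using e(2)[of "y - x"] \<open>h' x = 0\<close> that r by auto
    moreover have "k y > 0" using k_pos[of y] that r by auto
    ultimately show ?thesis by (simp add: zero_less_mult_iff)
  qed
  obtain y where y: "x < y" "y < x + r" "h (x + r) - h x = r * h' y"
    using MVT2[of x "x + r" h h'] r h' h'_pos by force
  then have "0 < r * h' y" using h'_pos r by simp
  then have "h x < h (x + r)" using y by simp
  moreover have "h (x + r) \<le> h x" using max[of "x + r"] r by auto
  ultimately show False by simp
qed

lemma abs_diff_le_of_deriv_bound:
  fixes f g f' g' :: "real \<Rightarrow> real"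
  assumes "a \<le> b" "continuous_on {a..b} f" "continuous_on {a..b} g"
    and "\<And>x. a < x \<Longrightarrow> x < b \<Longrightarrow> (f has_real_derivative f' x) (at x)"
    and "\<And>x. a < x \<Longrightarrow> x < b \<Longrightarrow> (g has_real_derivative g' x) (at x)"
    and "\<And>x. a < x \<Longrightarrow> x < b \<Longrightarrow> \<bar>f' x\<bar> \<le> g' x"
  shows "\<bar>f b - f a\<bar> \<le> g b - g a"
proof -
  have "h a \<le> h b" if "h = (\<lambda>x. g x + s * f x)" "\<bar>s\<bar> = 1" for h s
  proof (rule DERIV_nonneg_imp_increasing_open[OF \<open>a \<le> b\<close>])
    fix x assume "a < x" "x < b"
    then have "(h has_real_derivative g' x + s * f' x) (at x)"
      unfolding that by (intro DERIV_add DERIV_cmult assms)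
    moreover have "0 \<le> g' x + s * f' x"
      using assms(6)[OF \<open>a < x\<close> \<open>x < b\<close>] \<open>\<bar>s\<bar> = 1\<close> by (auto simp: abs_if split: if_splits)
    ultimately show "\<exists>y. (h has_real_derivative y) (at x) \<and> 0 \<le> y" by blast
  qed (use assms(2,3) that in \<open>auto intro!: continuous_intros\<close>)
  from this[OF refl, of 1] this[OF refl, of "-1"] show ?thesis by auto
qed

lemma d1_has_real_derivative:
  fixes f :: "real \<times> real \<Rightarrow> real"
  assumes "f differentiable (at (t, th))"
  shows "((\<lambda>s. f (s, th)) has_real_derivative d1 f (t, th)) (at t)"
proof -
  have "(f \<circ> (\<lambda>s. (s, th))) differentiable (at t)"
    by (rule differentiable_chain_at) (auto intro!: derivative_intros simp: assms)
  then show ?thesis unfolding d1_def by (simp add: o_def DERIV_deriv_iff_real_differentiable)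
qed

lemma d2_has_real_derivative:
  fixes f :: "real \<times> real \<Rightarrow> real"
  assumes "f differentiable (at (t, th))"
  shows "((\<lambda>s. f (t, s)) has_real_derivative d2 f (t, th)) (at th)"
proof -
  have "(f \<circ> (\<lambda>s. (t, s))) differentiable (at th)"
    by (rule differentiable_chain_at) (auto intro!: derivative_intros simp: assms)
  then show ?thesis unfolding d2_def by (simp add: o_def DERIV_deriv_iff_real_differentiable)
qed

lemma C2_on_differentiable_at:
  assumes "C2_on ({0<..} \<times> UNIV) u" "t > 0"
  shows "u differentiable (at (t, th))" "d1 u differentiable (at (t, th))"
    "d2 u differentiable (at (t, th))"
proof -
  have "open ({0::real<..} \<times> (UNIV::real set))" by (intro open_Times open_greaterThan open_UNIV)
  then show "u differentiable (at (t, th))" "d1 u differentiable (at (t, th))"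
    "d2 u differentiable (at (t, th))"
    using assms differentiable_on_eq_differentiable_at unfolding C2_on_def by auto
qed

lemma d2_d2_le_at_max:
  assumes u: "C2_on ({0<..} \<times> UNIV) u" and v: "C2_on ({0<..} \<times> UNIV) v" and "t > 0"
    and max: "\<And>th. u (t, th) - v (t, th) \<le> u (t, th0) - v (t, th0)"
  shows "d2 (d2 u) (t, th0) \<le> d2 (d2 v) (t, th0)"
proof -
  have "d2 (d2 u) (t, th0) - d2 (d2 v) (t, th0) \<le> 0"
  proof (rule local_max_imp_flux_deriv_nonpos[where k = "\<lambda>_. 1" and d = 1])
    show "((\<lambda>s. u (t, s) - v (t, s)) has_real_derivative d2 u (t, y) - d2 v (t, y)) (at y)" for y
      by (intro DERIV_diff d2_has_real_derivative C2_on_differentiable_at u v \<open>t > 0\<close>)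
    have "((\<lambda>s. d2 u (t, s) - d2 v (t, s)) has_real_derivative
        d2 (d2 u) (t, th0) - d2 (d2 v) (t, th0)) (at th0)"
      by (intro DERIV_diff d2_has_real_derivative C2_on_differentiable_at u v \<open>t > 0\<close>)
    then show "((\<lambda>s. 1 * (d2 u (t, s) - d2 v (t, s))) has_real_derivative
        d2 (d2 u) (t, th0) - d2 (d2 v) (t, th0)) (at th0)" by simp
  qed (use max in auto)
  then show ?thesis by simp
qed

lemma indefinite_integral_has_real_derivative_at:
  fixes g :: "real \<Rightarrow> real"
  assumes "continuous_on {0..} g" "t > 0"
  shows "((\<lambda>x. integral {0..x} g) has_real_derivative g t) (at t)"
proof -
  have "continuous_on {0..t+1} g" using assms(1) by (rule continuous_on_subset) auto
  then have "((\<lambda>x. integral {0..x} g) has_real_derivative g t) (at t within {0..t+1})"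
    by (rule integral_has_real_derivative) (use assms in auto)
  moreover have "t \<in> interior {0..t+1}" using assms by simp
  ultimately show ?thesis using at_within_interior[of t "{0..t+1}"] by metis
qed

lemma indefinite_integral_continuous_on:
  fixes g :: "real \<Rightarrow> real"
  assumes "continuous_on {0..} g"
  shows "continuous_on {0..T} (\<lambda>x. integral {0..x} g)"
  by (rule indefinite_integral_continuous_1, rule integrable_continuous_real,
      rule continuous_on_subset[OF assms]) auto

lemma periodic_continuous_attains_sup:
  fixes z :: "real \<times> real \<Rightarrow> real"
  assumes "a \<le> b" "continuous_on ({a..b} \<times> UNIV) z"
    and periodic: "\<And>t th. z (t, th + 2 * pi) = z (t, th)"
  obtains t0 th0 where "t0 \<in> {a..b}" "\<And>t th. t \<in> {a..b} \<Longrightarrow> z (t, th) \<le> z (t0, th0)"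
proof -
  define K where "K = {a..b} \<times> {0..2 * pi}"
  have "continuous_on K z" using assms(2) by (rule continuous_on_subset) (auto simp: K_def)
  moreover have "compact K" unfolding K_def by (intro compact_Times compact_Icc)
  moreover have "K \<noteq> {}" using \<open>a \<le> b\<close> by (simp add: K_def)
  ultimately obtain q0 where q0: "q0 \<in> K" "\<And>q. q \<in> K \<Longrightarrow> z q \<le> z q0"
    using continuous_attains_sup by metis
  have "z (t, th) \<le> z q0" if "t \<in> {a..b}" for t th
  proof -
    interpret periodic_fun_simple "\<lambda>s. z (t, s)" "2 * pi" by unfold_locales (rule periodic)
    define k where "k = \<lfloor>th / (2 * pi)\<rfloor>"
    define y where "y = th + of_int (- k) * (2 * pi)"
    have "of_int k \<le> th / (2 * pi)" "th / (2 * pi) < of_int k + 1" unfolding k_def by linarith+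
    then have "2 * pi * of_int k \<le> th" "th < 2 * pi * (of_int k + 1)"
      by (simp_all add: field_simps)
    then have "y \<in> {0..2 * pi}" unfolding y_def by (simp add: algebra_simps)
    moreover have "z (t, th) = z (t, y)" unfolding y_def by (rule plus_of_int[symmetric])
    ultimately show ?thesis using q0(2) that by (simp add: K_def)
  qed
  moreover obtain t0 th0 where "q0 = (t0, th0)" by fastforce
  ultimately show ?thesis using that q0(1) by (auto simp: K_def)
qed

lemma bounded_harmonic_on_end_diff_bounded:
  assumes "bounded_harmonic_on_end X u" "bounded_harmonic_on_end X v"
  obtains M where "\<And>s th. s \<ge> 0 \<Longrightarrow> u (s, th) - v (s, th) \<le> M"
proof -
  have "bounded (u ` ({0..} \<times> UNIV))" "bounded (v ` ({0..} \<times> UNIV))"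
    using assms by (simp_all add: bounded_harmonic_on_end_def)
  then obtain Bu Bv where Bu: "\<And>y. y \<in> u ` ({0..} \<times> UNIV) \<Longrightarrow> \<bar>y\<bar> \<le> Bu"
    and Bv: "\<And>y. y \<in> v ` ({0..} \<times> UNIV) \<Longrightarrow> \<bar>y\<bar> \<le> Bv"
    unfolding bounded_iff real_norm_def by metis
  have "u (s, th) - v (s, th) \<le> Bu + Bv" if "s \<ge> 0" for s th
  proof -
    have "(s, th) \<in> {0..} \<times> UNIV" using that by simp
    then have "\<bar>u (s, th)\<bar> \<le> Bu" "\<bar>v (s, th)\<bar> \<le> Bv" by (auto intro: Bu Bv)
    then show ?thesis by linarith
  qed
  then show ?thesis by (rule that)
qed

lemma in_span3_obtain:
  fixes e1 e2 f :: "'a::real_vector"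
  assumes "x \<in> span {e1, e2, f}"
  obtains k1 k2 c where "x = k1 *\<^sub>R e1 + k2 *\<^sub>R e2 + c *\<^sub>R f"
proof -
  obtain k1 where "x - k1 *\<^sub>R e1 \<in> span {e2, f}" using assms span_insert[of e1 "{e2, f}"] by auto
  then obtain k2 where "x - k1 *\<^sub>R e1 - k2 *\<^sub>R e2 \<in> span {f}" using span_insert[of e2 "{f}"] by auto
  then obtain c where "x - k1 *\<^sub>R e1 - k2 *\<^sub>R e2 = c *\<^sub>R f" using span_singleton[of f] by auto
  then show ?thesis using that[of k1 k2 c] by (simp add: algebra_simps)
qed

lemma at_within_Ici_eq_at: "(t::real) > a \<Longrightarrow> at t within {a..} = at t"
  by (rule at_within_interior) simp

locale end_of_revolution =
  fixes p f1 f2 :: "'a::real_inner" and beta beta' :: "real \<Rightarrow> 'a"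
  assumes f1_unit: "f1 \<bullet> f1 = 1" and f2_unit: "f2 \<bullet> f2 = 1" and f1_f2_orth: "f1 \<bullet> f2 = 0"
    and beta_deriv: "\<And>t. t \<ge> 0 \<Longrightarrow> (beta has_vector_derivative beta' t) (at t within {0..})"
    and beta'_differentiable: "\<And>t. t \<ge> 0 \<Longrightarrow> beta' differentiable (at t within {0..})"
    and regular: "\<And>t. t \<ge> 0 \<Longrightarrow> beta' t \<noteq> 0"
    and infinite_length: "filterlim (\<lambda>T. integral {0..T} (\<lambda>t. norm (beta' t))) at_top at_top"
    and in_plane: "\<And>t. t \<ge> 0 \<Longrightarrow> (beta t - p) \<bullet> f2 = 0"
    and off_axis: "\<And>t. t \<ge> 0 \<Longrightarrow> (beta t - p) \<bullet> f1 \<noteq> 0"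
begin

abbreviation "X \<equiv> end_imm p f1 f2 beta"

definition "radius t = (beta t - p) \<bullet> f1"
definition "speed t = norm (beta' t)"
definition "arclength t = integral {0..t} speed"

text \<open>In the conformal coordinate \<open>\<psi>\<close> the Laplace--Beltrami operator is, up to a positive
  factor, \<open>(weight u\<^sub>t)\<^sub>t + u\<^sub>\<theta>\<^sub>\<theta> / weight\<close>.\<close>
definition "weight t = \<bar>radius t\<bar> / speed t"
definition "dpsi t = speed t / \<bar>radius t\<bar>"
definition "psi t = integral {0..t} dpsi"

lemma beta_has_vector_derivative_at: "t > 0 \<Longrightarrow> (beta has_vector_derivative beta' t) (at t)"
  using beta_deriv[of t] at_within_Ici_eq_at[of 0 t] by simp

lemma beta'_differentiable_at: "t > 0 \<Longrightarrow> beta' differentiable (at t)"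
  using beta'_differentiable[of t] at_within_Ici_eq_at[of 0 t] by simp

lemma beta_continuous_on: "continuous_on {0..} beta"
  using beta_deriv by (auto simp: continuous_on_eq_continuous_within intro: has_vector_derivative_continuous)

lemma beta'_continuous_on: "continuous_on {0..} beta'"
  using beta'_differentiable
  by (auto simp: continuous_on_eq_continuous_within intro: differentiable_imp_continuous_within)

lemma speed_pos: "t \<ge> 0 \<Longrightarrow> speed t > 0"
  using regular by (simp add: speed_def)

lemma radius_nonzero: "t \<ge> 0 \<Longrightarrow> \<bar>radius t\<bar> > 0"
  using off_axis by (simp add: radius_def)

lemma weight_pos: "t \<ge> 0 \<Longrightarrow> weight t > 0"
  using speed_pos radius_nonzero by (simp add: weight_def)

lemma dpsi_pos: "t \<ge> 0 \<Longrightarrow> dpsi t > 0"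
  using speed_pos radius_nonzero by (simp add: dpsi_def)

lemma weight_dpsi: "t \<ge> 0 \<Longrightarrow> weight t * dpsi t = 1"
  using speed_pos[of t] radius_nonzero[of t] by (simp add: weight_def dpsi_def)

lemma radius_has_real_derivative: "t > 0 \<Longrightarrow> (radius has_real_derivative beta' t \<bullet> f1) (at t)"
  unfolding has_real_derivative_iff_has_vector_derivative radius_def[abs_def]
  using bounded_linear.has_vector_derivative[OF bounded_linear_inner_left
      has_vector_derivative_diff[OF beta_has_vector_derivative_at has_vector_derivative_const]]
  by simp

lemma beta'_orthogonal_f2: "t > 0 \<Longrightarrow> beta' t \<bullet> f2 = 0"
proof -
  assume "t > 0"
  have "((\<lambda>s. (beta s - p) \<bullet> f2) has_real_derivative beta' t \<bullet> f2) (at t)"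
    unfolding has_real_derivative_iff_has_vector_derivative
    using bounded_linear.has_vector_derivative[OF bounded_linear_inner_left
        has_vector_derivative_diff[OF beta_has_vector_derivative_at[OF \<open>t > 0\<close>]
          has_vector_derivative_const]]
    by simp
  moreover have "((\<lambda>s. (beta s - p) \<bullet> f2) has_real_derivative 0) (at t)"
    by (rule has_field_derivative_transform_within_open[OF DERIV_const, of "{0<..}"])
      (use \<open>t > 0\<close> in_plane in auto)
  ultimately show ?thesis by (rule DERIV_unique)
qed

lemma end_imm_eq:
  "t \<ge> 0 \<Longrightarrow> X (t, th) = beta t + ((cos th - 1) * radius t) *\<^sub>R f1 + (sin th * radius t) *\<^sub>R f2"
  using in_plane[of t] by (simp add: end_imm_def rot_def Let_def radius_def)

lemma Xt_eq:
  assumes "t > 0"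
  shows "Xt X (t, th) = beta' t + ((cos th - 1) * (beta' t \<bullet> f1)) *\<^sub>R f1 + (sin th * (beta' t \<bullet> f1)) *\<^sub>R f2"
proof -
  have "((\<lambda>s. beta s + ((cos th - 1) * radius s) *\<^sub>R f1 + (sin th * radius s) *\<^sub>R f2)
      has_vector_derivative
        beta' t + ((cos th - 1) * (beta' t \<bullet> f1)) *\<^sub>R f1 + (sin th * (beta' t \<bullet> f1)) *\<^sub>R f2) (at t)"
    using radius_has_real_derivative[OF assms]
    by (auto intro!: derivative_eq_intros beta_has_vector_derivative_at assms
        simp: has_real_derivative_iff_has_vector_derivative mult.commute)
  then have "((\<lambda>s. X (s, th)) has_vector_derivative
        beta' t + ((cos th - 1) * (beta' t \<bullet> f1)) *\<^sub>R f1 + (sin th * (beta' t \<bullet> f1)) *\<^sub>R f2) (at t)"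
    by (rule has_vector_derivative_transform_within_open[of _ _ _ "{0<..}"])
      (use assms end_imm_eq in auto)
  then show ?thesis unfolding Xt_def by (simp add: vector_derivative_at)
qed

lemma Xth_eq:
  assumes "t \<ge> 0"
  shows "Xth X (t, th) = (- sin th * radius t) *\<^sub>R f1 + (cos th * radius t) *\<^sub>R f2"
proof -
  have "((\<lambda>s. X (t, s)) has_vector_derivative
      (- sin th * radius t) *\<^sub>R f1 + (cos th * radius t) *\<^sub>R f2) (at th)"
    unfolding end_imm_eq[OF assms] by (auto intro!: derivative_eq_intros)
  then show ?thesis unfolding Xth_def by (simp add: vector_derivative_at)
qed

lemma induced_metric:
  assumes "t > 0"
  shows "g11 X (t, th) = (speed t)\<^sup>2" "g12 X (t, th) = 0" "g22 X (t, th) = (radius t)\<^sup>2"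
    "gdet X (t, th) = (speed t * radius t)\<^sup>2"
proof -
  define V where "V = beta' t"
  define v where "v = V \<bullet> f1"
  have V2: "V \<bullet> f2 = 0" using beta'_orthogonal_f2[OF assms] by (simp add: V_def)
  have f21: "f2 \<bullet> f1 = 0" using f1_f2_orth by (simp add: inner_commute)
  have sc: "(sin th)\<^sup>2 + (cos th)\<^sup>2 = 1" by simp
  have VV: "V \<bullet> V = (speed t)\<^sup>2" by (simp add: speed_def V_def power2_norm_eq_inner)
  note XT = Xt_eq[OF assms, folded V_def, folded v_def]
  note XH = Xth_eq[OF less_imp_le[OF assms]]
  note simps = inner_add_left inner_add_right inner_commute[of f1 V] inner_commute[of f2 V]
    V2 f1_unit f2_unit f1_f2_orth f21
  show g11: "g11 X (t, th) = (speed t)\<^sup>2"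
    unfolding g11_def XT
    apply (simp add: simps VV flip: v_def)
    apply (simp add: algebra_simps power2_eq_square)
    using sc unfolding power2_eq_square by algebra
  show g12: "g12 X (t, th) = 0"
    unfolding g12_def XT XH using assms
    by (simp add: simps flip: v_def) (simp add: algebra_simps simps flip: v_def)
  show g22: "g22 X (t, th) = (radius t)\<^sup>2"
    unfolding g22_def XH using assms
    apply (simp add: simps inner_diff_left inner_diff_right)
    using sc unfolding power2_eq_square by algebra
  show "gdet X (t, th) = (speed t * radius t)\<^sup>2"
    unfolding gdet_def g11 g12 g22 by (simp add: power_mult_distrib)
qed

lemma flux_eq:
  assumes "t > 0"
  shows "flux1 X u (t, th) = weight t * d1 u (t, th)"
    "flux2 X u (t, th) = d2 u (t, th) / weight t"
    "laplace_beltrami X u (t, th)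
       = (d1 (flux1 X u) (t, th) + d2 (flux2 X u) (t, th)) / (speed t * \<bar>radius t\<bar>)"
proof -
  have sqrt_gdet: "sqrt (gdet X (t, th)) = speed t * \<bar>radius t\<bar>"
    using induced_metric(4)[OF assms] speed_pos[of t] assms by (simp add: abs_mult)
  have pos: "speed t > 0" "\<bar>radius t\<bar> > 0" using speed_pos radius_nonzero assms by auto
  have "(radius t)\<^sup>2 = \<bar>radius t\<bar> * \<bar>radius t\<bar>" by (simp add: power2_eq_square)
  then show "flux1 X u (t, th) = weight t * d1 u (t, th)"
    unfolding flux1_def sqrt_gdet induced_metric(1-3)[OF assms] weight_def using pos
    by (simp add: field_simps)
  show "flux2 X u (t, th) = d2 u (t, th) / weight t"
    unfolding flux2_def sqrt_gdet induced_metric(1-3)[OF assms] weight_def using pos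
    by (simp add: field_simps power2_eq_square)
  show "laplace_beltrami X u (t, th)
      = (d1 (flux1 X u) (t, th) + d2 (flux2 X u) (t, th)) / (speed t * \<bar>radius t\<bar>)"
    unfolding laplace_beltrami_def sqrt_gdet ..
qed

lemma weight_differentiable_at: "t > 0 \<Longrightarrow> weight differentiable (at t)"
proof -
  assume "t > 0"
  have "radius differentiable (at t)"
    using radius_has_real_derivative[OF \<open>t > 0\<close>] real_differentiable_def by blast
  then have "(norm \<circ> radius) differentiable (at t)"
    by (rule differentiable_chain_at) (use radius_nonzero \<open>t > 0\<close> in auto)
  moreover have "(norm \<circ> beta') differentiable (at t)"
    by (rule differentiable_chain_at[OF beta'_differentiable_at[OF \<open>t > 0\<close>]])
      (use regular \<open>t > 0\<close> in auto)
  ultimately show ?thesis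
    unfolding weight_def[abs_def] speed_def[abs_def] o_def real_norm_def
    using speed_pos[of t] \<open>t > 0\<close> by (intro differentiable_divide) (auto simp: speed_def)
qed

lemma speed_continuous_on: "continuous_on {0..} speed"
  unfolding speed_def[abs_def] using beta'_continuous_on by (intro continuous_on_norm)

lemma radius_continuous_on: "continuous_on {0..} radius"
  unfolding radius_def[abs_def] using beta_continuous_on by (intro continuous_intros)

lemma dpsi_continuous_on: "continuous_on {0..} dpsi"
  unfolding dpsi_def[abs_def] using speed_continuous_on radius_continuous_on radius_nonzero
  by (intro continuous_intros) auto

lemma arclength_has_real_derivative: "t > 0 \<Longrightarrow> (arclength has_real_derivative speed t) (at t)"
  unfolding arclength_def[abs_def]
  by (rule indefinite_integral_has_real_derivative_at[OF speed_continuous_on])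

lemma psi_has_real_derivative: "t > 0 \<Longrightarrow> (psi has_real_derivative dpsi t) (at t)"
  unfolding psi_def[abs_def]
  by (rule indefinite_integral_has_real_derivative_at[OF dpsi_continuous_on])

lemma arclength_continuous_on: "continuous_on {0..t} arclength"
  unfolding arclength_def[abs_def] by (rule indefinite_integral_continuous_on[OF speed_continuous_on])

lemma psi_continuous_on: "continuous_on {0..t} psi"
  unfolding psi_def[abs_def] by (rule indefinite_integral_continuous_on[OF dpsi_continuous_on])

lemma arclength_nonneg: "t \<ge> 0 \<Longrightarrow> arclength t \<ge> 0"
  unfolding arclength_def using speed_continuous_on speed_pos
  by (intro integral_nonneg integrable_continuous_real)
    (auto intro: continuous_on_subset less_imp_le)

lemma radius_le_arclength: "t \<ge> 0 \<Longrightarrow> \<bar>radius t\<bar> \<le> \<bar>radius 0\<bar> + arclength t"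
proof -
  assume "t \<ge> 0"
  have "\<bar>radius t - radius 0\<bar> \<le> arclength t - arclength 0"
  proof (rule abs_diff_le_of_deriv_bound[OF \<open>t \<ge> 0\<close>])
    show "continuous_on {0..t} radius" by (rule continuous_on_subset[OF radius_continuous_on]) auto
    show "continuous_on {0..t} arclength" by (rule arclength_continuous_on)
    show "\<bar>beta' x \<bullet> f1\<bar> \<le> speed x" for x
      using Cauchy_Schwarz_ineq2[of "beta' x" f1] f1_unit by (simp add: speed_def norm_eq_sqrt_inner)
  qed (auto intro: radius_has_real_derivative arclength_has_real_derivative)
  then show ?thesis by (simp add: arclength_def)
qed

lemma psi_ge_log_arclength:
  assumes "t \<ge> 0"
  shows "ln (\<bar>radius 0\<bar> + arclength t) - ln \<bar>radius 0\<bar> \<le> psi t"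
proof -
  have pos: "\<bar>radius 0\<bar> + arclength x > 0" if "x \<ge> 0" for x
    using radius_nonzero[of 0] arclength_nonneg[OF that] by linarith
  have "\<bar>ln (\<bar>radius 0\<bar> + arclength t) - ln (\<bar>radius 0\<bar> + arclength 0)\<bar> \<le> psi t - psi 0"
  proof (rule abs_diff_le_of_deriv_bound[OF assms])
    show "continuous_on {0..t} (\<lambda>x. ln (\<bar>radius 0\<bar> + arclength x))"
      by (intro continuous_intros arclength_continuous_on) (use pos in force)
    show "continuous_on {0..t} psi" by (rule psi_continuous_on)
    show "((\<lambda>x. ln (\<bar>radius 0\<bar> + arclength x)) has_real_derivative
        speed x / (\<bar>radius 0\<bar> + arclength x)) (at x)" if "0 < x" for x
      using pos[of x] that
      by (auto intro!: derivative_eq_intros arclength_has_real_derivative simp: field_simps)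
    show "\<bar>speed x / (\<bar>radius 0\<bar> + arclength x)\<bar> \<le> dpsi x" if "0 < x" for x
      using pos[of x] that speed_pos[of x] radius_nonzero[of x] radius_le_arclength[of x]
      by (simp add: dpsi_def frac_le)
  qed (auto intro: psi_has_real_derivative)
  then show ?thesis by (simp add: arclength_def psi_def)
qed

lemma psi_at_top: "filterlim psi at_top at_top"
proof (rule filterlim_at_top_mono)
  have "filterlim arclength at_top at_top"
    using infinite_length by (simp add: arclength_def[abs_def] speed_def[abs_def])
  then have "filterlim (\<lambda>t. \<bar>radius 0\<bar> + arclength t) at_top at_top"
    by (rule filterlim_tendsto_add_at_top[OF tendsto_const])
  then have "filterlim (\<lambda>t. ln (\<bar>radius 0\<bar> + arclength t)) at_top at_top"
    by (rule filterlim_compose[OF ln_at_top])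
  then show "filterlim (\<lambda>t. - ln \<bar>radius 0\<bar> + ln (\<bar>radius 0\<bar> + arclength t)) at_top at_top"
    by (rule filterlim_tendsto_add_at_top[OF tendsto_const])
  show "eventually (\<lambda>t. - ln \<bar>radius 0\<bar> + ln (\<bar>radius 0\<bar> + arclength t) \<le> psi t) at_top"
    using eventually_ge_at_top[of 0] by eventually_elim (use psi_ge_log_arclength in auto)
qed

end

context end_of_revolution
begin

lemma weight_d1_has_real_derivative:
  assumes "C2_on ({0<..} \<times> UNIV) u" "t > 0"
  shows "((\<lambda>s. weight s * d1 u (s, th)) has_real_derivative d1 (flux1 X u) (t, th)) (at t)"
proof -
  have "eventually (\<lambda>s. flux1 X u (s, th) = weight s * d1 u (s, th)) (nhds t)"
    using eventually_nhds_in_open[of "{0<..}" t] \<open>t > 0\<close> flux_eq(1)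
    by (auto elim!: eventually_mono)
  then have "d1 (flux1 X u) (t, th) = deriv (\<lambda>s. weight s * d1 u (s, th)) t"
    unfolding d1_def by (simp add: deriv_cong_ev)
  moreover have "(\<lambda>s. d1 u (s, th)) differentiable (at t)"
    using d1_has_real_derivative[OF C2_on_differentiable_at(2)[OF assms]]
    by (auto simp: real_differentiable_def)
  then have "(\<lambda>s. weight s * d1 u (s, th)) differentiable (at t)"
    by (rule differentiable_mult[OF weight_differentiable_at[OF \<open>t > 0\<close>]])
  ultimately show ?thesis by (simp add: DERIV_deriv_iff_real_differentiable)
qed

lemma harmonic_d1_flux1:
  assumes "harmonic_end X u" "t > 0"
  shows "d1 (flux1 X u) (t, th) = - d2 (d2 u) (t, th) / weight t"
proof -
  have C2: "C2_on ({0<..} \<times> UNIV) u" using assms(1) by (simp add: harmonic_end_def)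
  have "((\<lambda>s. d2 u (t, s) / weight t) has_real_derivative d2 (d2 u) (t, th) / weight t) (at th)"
    by (intro DERIV_cdivide d2_has_real_derivative C2_on_differentiable_at(3)[OF C2 \<open>t > 0\<close>])
  then have "d2 (flux2 X u) (t, th) = d2 (d2 u) (t, th) / weight t"
    using flux_eq(2)[OF \<open>t > 0\<close>] by (simp add: d2_def DERIV_imp_deriv)
  moreover have "laplace_beltrami X u (t, th) = 0" using assms by (simp add: harmonic_end_def)
  ultimately show ?thesis
    using flux_eq(3)[OF \<open>t > 0\<close>] speed_pos[of t] radius_nonzero[of t] \<open>t > 0\<close> by simp
qed

lemma harmonic_plus_barrier_has_real_derivative:
  assumes "C2_on ({0<..} \<times> UNIV) u" "C2_on ({0<..} \<times> UNIV) v" "t > 0"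
  shows "((\<lambda>s. u (s, th) - v (s, th) + (\<delta> * (psi s)\<^sup>2 - \<epsilon> * psi s)) has_real_derivative
      d1 u (t, th) - d1 v (t, th) + (2 * \<delta> * psi t - \<epsilon>) * dpsi t) (at t)"
  by (auto intro!: derivative_eq_intros d1_has_real_derivative psi_has_real_derivative
      C2_on_differentiable_at(1)[OF assms(1,3)] C2_on_differentiable_at(1)[OF assms(2,3)] assms(3)
      simp: algebra_simps)

text \<open>The barrier \<open>\<delta> \<psi>\<^sup>2 - \<epsilon> \<psi>\<close> is strictly subharmonic: it adds \<open>2 \<delta> \<psi>'\<close> to the derivative of
  the flux.\<close>
lemma weighted_harmonic_plus_barrier_has_real_derivative:
  assumes Cu: "C2_on ({0<..} \<times> UNIV) u" and Cv: "C2_on ({0<..} \<times> UNIV) v" and "t > 0"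
  shows "((\<lambda>s. weight s * (d1 u (s, th) - d1 v (s, th) + (2 * \<delta> * psi s - \<epsilon>) * dpsi s))
      has_real_derivative d1 (flux1 X u) (t, th) - d1 (flux1 X v) (t, th) + 2 * \<delta> * dpsi t) (at t)"
proof -
  have deriv: "((\<lambda>s. weight s * d1 u (s, th) - weight s * d1 v (s, th) + (2 * \<delta> * psi s - \<epsilon>))
      has_real_derivative d1 (flux1 X u) (t, th) - d1 (flux1 X v) (t, th) + (2 * \<delta> * dpsi t - 0))
      (at t)"
    by (intro DERIV_add DERIV_diff DERIV_const DERIV_cmult weight_d1_has_real_derivative
        psi_has_real_derivative Cu Cv \<open>t > 0\<close>)
  have "weight s * d1 u (s, th) - weight s * d1 v (s, th) + (2 * \<delta> * psi s - \<epsilon>)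
      = weight s * (d1 u (s, th) - d1 v (s, th) + (2 * \<delta> * psi s - \<epsilon>) * dpsi s)"
    if "s \<in> {0<..}" for s
  proof -
    have "weight s * (d1 u (s, th) - d1 v (s, th) + (2 * \<delta> * psi s - \<epsilon>) * dpsi s)
        = weight s * d1 u (s, th) - weight s * d1 v (s, th) + (2 * \<delta> * psi s - \<epsilon>) * (weight s * dpsi s)"
      by (simp add: algebra_simps)
    with weight_dpsi[of s] that show ?thesis by simp
  qed
  from has_field_derivative_transform_within_open[OF deriv open_greaterThan _ this] \<open>t > 0\<close>
  show ?thesis by simp
qed

lemma harmonic_plus_barrier_no_interior_max:
  assumes u: "harmonic_end X u" and v: "harmonic_end X v" and "\<delta> > 0" "0 < t0" "t0 < T"
    and max: "\<And>t th. t \<in> {0..T} \<Longrightarrow>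
      u (t, th) - v (t, th) + (\<delta> * (psi t)\<^sup>2 - \<epsilon> * psi t)
        \<le> u (t0, th0) - v (t0, th0) + (\<delta> * (psi t0)\<^sup>2 - \<epsilon> * psi t0)"
  shows False
proof -
  have Cu: "C2_on ({0<..} \<times> UNIV) u" and Cv: "C2_on ({0<..} \<times> UNIV) v"
    using u v by (simp_all add: harmonic_end_def)
  have "d2 (d2 u) (t0, th0) \<le> d2 (d2 v) (t0, th0)"
    by (rule d2_d2_le_at_max[OF Cu Cv \<open>0 < t0\<close>]) (use max[of t0] \<open>t0 < T\<close> \<open>0 < t0\<close> in auto)
  then have "d1 (flux1 X u) (t0, th0) - d1 (flux1 X v) (t0, th0) \<ge> 0"
    using harmonic_d1_flux1[OF u \<open>0 < t0\<close>] harmonic_d1_flux1[OF v \<open>0 < t0\<close>] weight_pos[of t0]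
      \<open>0 < t0\<close> by (simp add: diff_divide_distrib[symmetric] divide_nonneg_pos)
  moreover have "d1 (flux1 X u) (t0, th0) - d1 (flux1 X v) (t0, th0) + 2 * \<delta> * dpsi t0 \<le> 0"
  proof (rule local_max_imp_flux_deriv_nonpos[where d = "min t0 (T - t0)" and k = weight])
    show "0 < min t0 (T - t0)" using \<open>0 < t0\<close> \<open>t0 < T\<close> by simp
    show "((\<lambda>s. weight s * (d1 u (s, th0) - d1 v (s, th0) + (2 * \<delta> * psi s - \<epsilon>) * dpsi s))
        has_real_derivative d1 (flux1 X u) (t0, th0) - d1 (flux1 X v) (t0, th0) + 2 * \<delta> * dpsi t0)
        (at t0)"
      by (rule weighted_harmonic_plus_barrier_has_real_derivative[OF Cu Cv \<open>0 < t0\<close>])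
  next
    fix y assume y: "\<bar>t0 - y\<bar> < min t0 (T - t0)"
    then show "u (y, th0) - v (y, th0) + (\<delta> * (psi y)\<^sup>2 - \<epsilon> * psi y)
        \<le> u (t0, th0) - v (t0, th0) + (\<delta> * (psi t0)\<^sup>2 - \<epsilon> * psi t0)"
      by (intro max) auto
    show "weight y > 0" using y weight_pos[of y] by auto
    show "((\<lambda>s. u (s, th0) - v (s, th0) + (\<delta> * (psi s)\<^sup>2 - \<epsilon> * psi s)) has_real_derivative
        d1 u (y, th0) - d1 v (y, th0) + (2 * \<delta> * psi y - \<epsilon>) * dpsi y) (at y)"
      using y by (intro harmonic_plus_barrier_has_real_derivative Cu Cv) auto
  qed
  ultimately show False using dpsi_pos[of t0] \<open>\<delta> > 0\<close> \<open>0 < t0\<close> by (smt (verit) mult_pos_pos)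
qed

lemma barrier_exists:
  assumes "w > 0" "t \<ge> 0"
  obtains \<epsilon> \<delta> T where "\<delta> > 0" "T \<ge> t" "\<delta> * (psi t)\<^sup>2 - \<epsilon> * psi t > - w"
    "\<delta> * (psi T)\<^sup>2 - \<epsilon> * psi T < - 2 * M"
proof -
  have "psi t \<ge> 0"
    unfolding psi_def using dpsi_continuous_on dpsi_pos
    by (intro integral_nonneg integrable_continuous_real)
      (auto intro: continuous_on_subset less_imp_le)
  define \<epsilon> where "\<epsilon> = w / (2 * (psi t + 1))"
  have "\<epsilon> > 0" unfolding \<epsilon>_def using \<open>w > 0\<close> \<open>psi t \<ge> 0\<close> by (intro divide_pos_pos) auto
  have "\<epsilon> * psi t < w"
    using \<open>w > 0\<close> \<open>psi t \<ge> 0\<close> by (simp add: \<epsilon>_def field_simps) (smt (verit) mult_nonneg_nonneg)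
  have "eventually (\<lambda>T. psi T > 4 * \<bar>M\<bar> / \<epsilon> + 1) at_top"
    using psi_at_top unfolding filterlim_at_top_dense by blast
  then have "eventually (\<lambda>T. T \<ge> t \<and> psi T > 4 * \<bar>M\<bar> / \<epsilon> + 1) at_top"
    by (intro eventually_conj eventually_ge_at_top)
  then obtain T where T: "T \<ge> t" "psi T > 4 * \<bar>M\<bar> / \<epsilon> + 1"
    by (auto simp: eventually_at_top_linorder)
  have "psi T > 0" using T(2) \<open>\<epsilon> > 0\<close> by (smt (verit) divide_nonneg_pos)
  define \<delta> where "\<delta> = \<epsilon> / (2 * psi T)"
  have "\<delta> > 0" using \<open>\<epsilon> > 0\<close> \<open>psi T > 0\<close> by (simp add: \<delta>_def)
  moreover have "\<delta> * (psi t)\<^sup>2 - \<epsilon> * psi t > - w"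
    using \<open>\<epsilon> * psi t < w\<close> \<open>\<delta> > 0\<close> by (smt (verit) zero_le_power2 mult_nonneg_nonneg)
  moreover have "\<delta> * (psi T)\<^sup>2 - \<epsilon> * psi T = - \<epsilon> * psi T / 2"
    using \<open>psi T > 0\<close> by (simp add: \<delta>_def power2_eq_square field_simps)
  moreover have "\<epsilon> * psi T > 4 * \<bar>M\<bar>"
    using T(2) \<open>\<epsilon> > 0\<close> by (simp add: field_simps)
  ultimately show ?thesis using that T(1) by fastforce
qed

lemma bounded_harmonic_le:
  assumes u: "bounded_harmonic_on_end X u" and v: "bounded_harmonic_on_end X v"
    and boundary: "\<And>th. u (0, th) = v (0, th)" and "t \<ge> 0"
  shows "u (t, th) \<le> v (t, th)"
proof (rule ccontr)
  assume "\<not> u (t, th) \<le> v (t, th)"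
  obtain M where bound: "\<And>s th'. s \<ge> 0 \<Longrightarrow> u (s, th') - v (s, th') \<le> M"
    using bounded_harmonic_on_end_diff_bounded[OF u v] by blast
  obtain \<epsilon> \<delta> T where "\<delta> > 0" "T \<ge> t"
    and at_t: "\<delta> * (psi t)\<^sup>2 - \<epsilon> * psi t > - (u (t, th) - v (t, th))"
    and at_T: "\<delta> * (psi T)\<^sup>2 - \<epsilon> * psi T < - 2 * \<bar>M\<bar>"
    by (rule barrier_exists[of "u (t, th) - v (t, th)" t "\<bar>M\<bar>"])
      (use \<open>\<not> u (t, th) \<le> v (t, th)\<close> \<open>t \<ge> 0\<close> in auto)
  define z where "z q = u q - v q + (\<delta> * (psi (fst q))\<^sup>2 - \<epsilon> * psi (fst q))" for q
  have sub: "{0..T} \<times> UNIV \<subseteq> {0..} \<times> (UNIV :: real set)" by auto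
  have "continuous_on ({0..} \<times> UNIV) u" "continuous_on ({0..} \<times> UNIV) v"
    using u v by (simp_all add: bounded_harmonic_on_end_def)
  then have "continuous_on ({0..T} \<times> UNIV) u" "continuous_on ({0..T} \<times> UNIV) v"
    by (auto intro: continuous_on_subset[OF _ sub])
  moreover have "continuous_on ({0..T} \<times> UNIV) (\<lambda>q. psi (fst q))"
    by (intro continuous_on_compose2[OF psi_continuous_on] continuous_intros) auto
  ultimately have cont: "continuous_on ({0..T} \<times> UNIV) z"
    unfolding z_def by (intro continuous_intros)
  have periodic: "z (s, th' + 2 * pi) = z (s, th')" for s th'
    using u v by (simp add: z_def bounded_harmonic_on_end_def)
  obtain t0 th0 where "t0 \<in> {0..T}" and max: "\<And>s th'. s \<in> {0..T} \<Longrightarrow> z (s, th') \<le> z (t0, th0)"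
    by (rule periodic_continuous_attains_sup[of 0 T z, OF _ cont periodic])
      (use \<open>T \<ge> t\<close> \<open>t \<ge> 0\<close> in auto)
  have "z (t0, th0) > 0" using max[of t th] at_t \<open>T \<ge> t\<close> \<open>t \<ge> 0\<close> by (simp add: z_def)
  moreover have "z (0, th0) = 0" by (simp add: z_def psi_def boundary)
  moreover have "z (T, th0) < 0" using bound[of T th0] at_T \<open>T \<ge> t\<close> \<open>t \<ge> 0\<close> by (simp add: z_def)
  ultimately have "0 < t0" "t0 < T" using \<open>t0 \<in> {0..T}\<close> by (auto simp: order_le_less)
  moreover have "u (s, th') - v (s, th') + (\<delta> * (psi s)\<^sup>2 - \<epsilon> * psi s)
      \<le> u (t0, th0) - v (t0, th0) + (\<delta> * (psi t0)\<^sup>2 - \<epsilon> * psi t0)" if "s \<in> {0..T}" for s th'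
    using max[OF that, of th'] by (simp add: z_def)
  moreover have "harmonic_end X u" "harmonic_end X v"
    using u v by (simp_all add: bounded_harmonic_on_end_def)
  ultimately show False
    using harmonic_plus_barrier_no_interior_max[of u v \<delta> t0 T \<epsilon> th0] \<open>\<delta> > 0\<close> by blast
qed

lemma parabolic: "parabolic_end X"
  unfolding parabolic_end_def
proof (intro allI impI)
  fix u v :: "real \<times> real \<Rightarrow> real" and t th :: real
  assume "bounded_harmonic_on_end X u \<and> bounded_harmonic_on_end X v \<and> (\<forall>th. u (0, th) = v (0, th))"
    and "0 \<le> t"
  then have "u (t, th) \<le> v (t, th)" "v (t, th) \<le> u (t, th)"
    using bounded_harmonic_le[of u v t th] bounded_harmonic_le[of v u t th] by simp_all
  then show "u (t, th) = v (t, th)" by (rule antisym)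
qed

end

lemma end_of_revolution_parabolic:
  fixes p f1 f2 :: "'a::real_inner" and beta :: "real \<Rightarrow> 'a"
  assumes "norm f1 = 1" "norm f2 = 1" "f1 \<bullet> f2 = 0"
    and "smooth_curve beta" "regular_curve beta" "infinite_length beta"
    and "\<And>t. t \<ge> 0 \<Longrightarrow> (beta t - p) \<bullet> f2 = 0"
    and "\<And>t. t \<ge> 0 \<Longrightarrow> (beta t - p) \<bullet> f1 \<noteq> 0"
  shows "parabolic_end (end_imm p f1 f2 beta)"
proof -
  obtain D where "D 0 = beta"
    and D: "\<And>k t. t \<ge> 0 \<Longrightarrow> (D k has_vector_derivative D (Suc k) t) (at t within {0..})"
    using \<open>smooth_curve beta\<close> unfolding smooth_curve_def by blast
  have nontrivial: "at t within {0..} \<noteq> bot" if "t \<ge> 0" for t :: real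
  proof -
    have "t islimpt {t<..<t+1}" by (rule islimpt_greaterThanLessThan1) simp
    then have "t islimpt {0..}" by (rule islimpt_subset) (use that in auto)
    then show ?thesis by (simp add: trivial_limit_within)
  qed
  have vd: "vector_derivative beta (at t within {0..}) = D 1 t" if "t \<ge> 0" for t
    using vector_derivative_within[OF nontrivial[OF that] D[OF that, of 0]] \<open>D 0 = beta\<close> by simp
  interpret end_of_revolution p f1 f2 beta "D 1"
  proof
    show "(beta has_vector_derivative D 1 t) (at t within {0..})" if "t \<ge> 0" for t
      using D[OF that, of 0] \<open>D 0 = beta\<close> by simp
    show "D 1 differentiable (at t within {0..})" if "t \<ge> 0" for t
      using D[OF that, of 1] by (rule differentiableI_vector)
    show "D 1 t \<noteq> 0" if "t \<ge> 0" for t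
      using \<open>regular_curve beta\<close> vd[OF that] that unfolding regular_curve_def by metis
    have "integral {0..T} (\<lambda>t. norm (vector_derivative beta (at t within {0..})))
        = integral {0..T} (\<lambda>t. norm (D 1 t))" for T
      by (rule integral_cong) (simp add: vd)
    then show "filterlim (\<lambda>T. integral {0..T} (\<lambda>t. norm (D 1 t))) at_top at_top"
      using \<open>infinite_length beta\<close> unfolding infinite_length_def by simp
  qed (use assms in \<open>auto simp: norm_eq_1\<close>)
  show ?thesis by (rule parabolic)
qed

lemma euclidean_end_parabolic:
  fixes p e f1 f2 :: "'a::real_inner" and beta :: "real \<Rightarrow> 'a"
  assumes "norm f1 = 1" "norm f2 = 1" "e \<bullet> f1 = 0" "e \<bullet> f2 = 0" "f1 \<bullet> f2 = 0"
    and "smooth_curve beta" "regular_curve beta" "infinite_length beta"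
    and in_plane: "\<And>t. t \<ge> 0 \<Longrightarrow> beta t \<in> {p + s *\<^sub>R e + r *\<^sub>R f1 | s r. True}"
    and off_axis: "\<And>t. t \<ge> 0 \<Longrightarrow> beta t \<notin> {p + s *\<^sub>R e | s. True}"
  shows "parabolic_end (end_imm p f1 f2 beta)"
proof (rule end_of_revolution_parabolic)
  fix t :: real assume "t \<ge> 0"
  then obtain s r where beta_t: "beta t = p + s *\<^sub>R e + r *\<^sub>R f1" using in_plane by blast
  then have "r \<noteq> 0" using off_axis[OF \<open>t \<ge> 0\<close>] by auto
  moreover have "f1 \<bullet> f1 = 1" using \<open>norm f1 = 1\<close> by (simp add: norm_eq_1)
  ultimately show "(beta t - p) \<bullet> f2 = 0" "(beta t - p) \<bullet> f1 \<noteq> 0"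
    using assms(3-5) by (simp_all add: beta_t inner_add_left)
qed (use assms in auto)

text \<open>On \<open>S\<^sup>3 \<subseteq> \<real>\<^sup>4\<close> the rotations fix the plane spanned by \<open>e1, e2\<close> pointwise; the induced metric
  is computed exactly as in the Euclidean case, and the condition \<open>|\<beta>| = 1\<close> plays no role.\<close>
lemma spherical_end_parabolic:
  fixes e1 e2 f1 f2 :: "'a::real_inner" and beta :: "real \<Rightarrow> 'a"
  assumes "norm f1 = 1" "norm f2 = 1"
    and "e1 \<bullet> f1 = 0" "e1 \<bullet> f2 = 0" "e2 \<bullet> f1 = 0" "e2 \<bullet> f2 = 0" "f1 \<bullet> f2 = 0"
    and "smooth_curve beta" "regular_curve beta" "infinite_length beta"
    and in_span: "\<And>t. t \<ge> 0 \<Longrightarrow> beta t \<in> span {e1, e2, f1}"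
    and off_axis: "\<And>t. t \<ge> 0 \<Longrightarrow> beta t \<notin> span {e1, e2}"
  shows "parabolic_end (end_imm 0 f1 f2 beta)"
proof (rule end_of_revolution_parabolic)
  fix t :: real assume "t \<ge> 0"
  then obtain k1 k2 c where beta_t: "beta t = k1 *\<^sub>R e1 + k2 *\<^sub>R e2 + c *\<^sub>R f1"
    using in_span in_span3_obtain by metis
  have "k1 *\<^sub>R e1 + k2 *\<^sub>R e2 \<in> span {e1, e2}" by (intro span_add span_mul span_base) auto
  then have "c \<noteq> 0" using off_axis[OF \<open>t \<ge> 0\<close>] beta_t by auto
  moreover have "f1 \<bullet> f1 = 1" using \<open>norm f1 = 1\<close> by (simp add: norm_eq_1)
  ultimately show "(beta t - 0) \<bullet> f2 = 0" "(beta t - 0) \<bullet> f1 \<noteq> 0"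
    using assms(3-7) by (simp_all add: beta_t inner_add_left)
qed (use assms in auto)

theorem theoremA:
  shows "(\<forall>(p::real^3) (e::real^3) (f1::real^3) (f2::real^3) (beta::real \<Rightarrow> real^3).
            norm e = 1 \<and> norm f1 = 1 \<and> norm f2 = 1 \<and>
            e \<bullet> f1 = 0 \<and> e \<bullet> f2 = 0 \<and> f1 \<bullet> f2 = 0 \<and>
            smooth_curve beta \<and> regular_curve beta \<and> infinite_length beta \<and>
            (\<forall>t\<ge>0. beta t \<in> {p + s *\<^sub>R e + r *\<^sub>R f1 | s r. True}) \<and>
            (\<forall>t\<ge>0. beta t \<notin> {p + s *\<^sub>R e | s. True})
            \<longrightarrow> parabolic_end (end_imm p f1 f2 beta))
       \<and>
         (\<forall>(e1::real^4) (e2::real^4) (f1::real^4) (f2::real^4) (beta::real \<Rightarrow> real^4).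
            norm e1 = 1 \<and> norm e2 = 1 \<and> norm f1 = 1 \<and> norm f2 = 1 \<and>
            e1 \<bullet> e2 = 0 \<and> e1 \<bullet> f1 = 0 \<and> e1 \<bullet> f2 = 0 \<and>
            e2 \<bullet> f1 = 0 \<and> e2 \<bullet> f2 = 0 \<and> f1 \<bullet> f2 = 0 \<and>
            smooth_curve beta \<and> regular_curve beta \<and> infinite_length beta \<and>
            (\<forall>t\<ge>0. norm (beta t) = 1 \<and> beta t \<in> span {e1, e2, f1} \<and> beta t \<notin> span {e1, e2})
            \<longrightarrow> parabolic_end (end_imm 0 f1 f2 beta))"
  apply (intro conjI allI impI; elim conjE)
   apply (rule euclidean_end_parabolic; blast)
  apply (rule spherical_end_parabolic; blast)
  done

end
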